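(* Let $\mathcal L$ be a finite distributive lattice, let $\mathbb F$ be the minimal multigraded free resolution of $H_{\mathcal L}$ and $\widetilde{\mathbb F}$ the minimal multigraded free resolution of $H_{\widetilde{\mathcal L}}$, both in the explicit form described in the context. Then the $S$-linear map $\pi:\sigma(\widetilde{\mathbb F})\to\mathbb F$ given by $\pi(\sigma(\widetilde b(r;T)))=(-1)^{|T|}\,b(r^T;T_r)$ is an isomorphism of complexes.
   Context: Let $P$ be the set of join-irreducible elements of $\mathcal L$ (elements with exactly one lower neighbor); for $p\in\mathcal L$ put $\ell(p)=\{q\in P:q\le p\}$. Let $K$ be a field, $S=K[x_p,y_p:p\in P]$, $u_q=\prod_{p\in\ell(q)}x_p\prod_{p\in P\setminus\ell(q)}y_p$ and $\widetilde u_q=\prod_{p\in P\setminus\ell(q)}x_p\prod_{p\in\ell(q)}y_p$ for $q\in\mathcal L$; $H_{\mathcal L}=(u_q:q\in\mathcal L)$, $H_{\widetilde{\mathcal L}}=(\widetilde u_q:q\in\mathcal L)$. $N(p)$ (resp. $M(p)$) is the set of lower (resp. upper) neighbors of $p$. For $q\in N(p)$, $p\setminus q$ is the unique element of $\ell(p)\setminus\ell(q)$; $p\setminus U=\{p\setminus q:q\in U\}$; for $s\in M(r)$, $s\setminus r$ is the unique element of $\ell(s)\setminus\ell(r)$ and $T\setminus r=\{s\setminus r:s\in T\}$. Fix a total order $<$ on $P$ extending its partial order and let $\lambda(q;U)=|\{u\in U: u<q\}|$. For $q\in\mathcal L$, $U\subseteq\mathcal L$: $q\wedge U=\{q\wedge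 u:u\in U\}$, $q\vee U=\{q\vee u:u\in U\}$. $\mathbb F$: $F_i$ is free with basis $b(p;U)$, $p\in\mathcal L$, $U\subseteq N(p)$, $|U|=i$, of multidegree $\mathrm{lcm}(u_p,u_q:q\in U)$, augmentation $b(p;\emptyset)\mapsto u_p$, differential $\partial(b(p;U))=\sum_{q\in U}(-1)^{\lambda(p\setminus q;\,p\setminus U)}\bigl(y_{p\setminus q}b(p;U\setminus\{q\})-x_{p\setminus q}b(q;q\wedge(U\setminus\{q\}))\bigr)$; this is a minimal multigraded free resolution of $H_{\mathcal L}$. $\widetilde{\mathbb F}$: $\widetilde F_i$ is free with basis $\widetilde b(r;T)$, $r\in\mathcal L$, $T\subseteq M(r)$, $|T|=i$, of multidegree $\mathrm{lcm}(\widetilde u_r,\widetilde u_s:s\in T)$, augmentation $\widetilde b(r;\emptyset)\mapsto\widetilde u_r$, differential $\widetilde\partial(\widetilde b(r;T))=\sum_{s\in T}(-1)^{\lambda(s\setminus r;\,T\setminus r)}\bigl(y_{s\setminus r}\widetilde b(r;T\setminus\{s\})-x_{s\setminus r}\widetilde b(s;s\vee(T\setminus\{s\}))\bigr)$; this is a minimal multigraded free resolution of $H_{\widetilde{\mathcal L}}$. Let $\sigma:S\to S$ be the involution $x_p\mapsto y_p$, $y_p\mapsto x_p$, let ${}^\sigma S$ be $S$ viewed as an $S$-module via $\sigma$, and $\sigma(\widetilde{\mathbb F})=\widetilde{\mathbb F}\otimes_S{}^\sigma S$, with basis $\sigma(\widetilde b(r;T))=\widetilde b(r;T)\otimes1$;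 it is a minimal free resolution of $\sigma(H_{\widetilde{\mathcal L}})=H_{\mathcal L}$. For $r\in\mathcal L$ and $T\subseteq M(r)$, $r^T$ is the join of all elements of $T$ and $T_r$ is the set of lower neighbors of $r^T$ in the interval $[r,r^T]$. *)

theory Defs
  imports Main "HOL-Library.Poly_Mapping"
begin

definition covers :: "'a::order \<Rightarrow> 'a \<Rightarrow> bool" where
  "covers q p \<longleftrightarrow> q < p \<and> \<not> (\<exists>z. q < z \<and> z < p)"

definition lowerN :: "'a::order \<Rightarrow> 'a set" where
  "lowerN p = {q. covers q p}"

definition upperN :: "'a::order \<Rightarrow> 'a set" where
  "upperN p = {s. covers p s}"

definition JI :: "'a::order set" where
  "JI = {p. card (lowerN p) = 1}"

definition ell :: "'a::order \<Rightarrow> 'a set" where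
  "ell p = {q \<in> JI. q \<le> p}"

text \<open>diffel p q: the unique element of ell p - ell q (used both for p\q, q in N(p),
  and for s\r, s in M(r)).\<close>
definition diffel :: "'a::order \<Rightarrow> 'a \<Rightarrow> 'a" where
  "diffel p q = the_elem (ell p - ell q)"

definition lam :: "('a \<Rightarrow> 'a \<Rightarrow> bool) \<Rightarrow> 'a \<Rightarrow> 'a set \<Rightarrow> nat" where
  "lam lt q U = card {u \<in> U. lt u q}"

text \<open>Variables: (p, True) is x_p, (p, False) is y_p.
  S is the subring of polynomials involving only variables indexed by P.\<close>
type_synonym ('a, 'k) spoly = "(('a \<times> bool) \<Rightarrow>\<^sub>0 nat) \<Rightarrow>\<^sub>0 'k"

definition Xv :: "'a \<Rightarrow> ('a, 'k::comm_ring_1) spoly" where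
  "Xv p = Poly_Mapping.single (Poly_Mapping.single (p, True) 1) 1"

definition Yv :: "'a \<Rightarrow> ('a, 'k::comm_ring_1) spoly" where
  "Yv p = Poly_Mapping.single (Poly_Mapping.single (p, False) 1) 1"

definition Scar :: "('a::order, 'k::comm_ring_1) spoly set" where
  "Scar = {f. \<forall>m \<in> Poly_Mapping.keys f. \<forall>v \<in> Poly_Mapping.keys m. fst v \<in> JI}"

definition swapv :: "'a \<times> bool \<Rightarrow> 'a \<times> bool" where
  "swapv v = (fst v, \<not> snd v)"

definition sigma :: "('a, 'k::comm_ring_1) spoly \<Rightarrow> ('a, 'k) spoly" where
  "sigma f = Poly_Mapping.map_key (Poly_Mapping.map_key swapv) f"

text \<open>A free S-module with (finite) basis B: coefficient functions B -> S, zero off B.\<close>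
definition Fmod :: "'b set \<Rightarrow> ('b \<Rightarrow> ('a::order, 'k::comm_ring_1) spoly) set" where
  "Fmod B = {f. (\<forall>b. b \<notin> B \<longrightarrow> f b = 0) \<and> (\<forall>b. f b \<in> Scar)}"

text \<open>The S-linear map sending basis element b (in B) to sum_b' M b b' * b'.\<close>
definition applyM :: "'b set \<Rightarrow> ('b \<Rightarrow> 'c \<Rightarrow> 'r::comm_ring_1) \<Rightarrow> ('b \<Rightarrow> 'r) \<Rightarrow> ('c \<Rightarrow> 'r)" where
  "applyM B M f = (\<lambda>c. \<Sum>b\<in>B. f b * M b c)"

definition Bas :: "nat \<Rightarrow> ('a::order \<times> 'a set) set" where
  "Bas i = {(p, U). U \<subseteq> lowerN p \<and> card U = i}"

definition Bast :: "nat \<Rightarrow> ('a::order \<times> 'a set) set" where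
  "Bast i = {(r, T). T \<subseteq> upperN r \<and> card T = i}"

text \<open>dcoef b c: coefficient of basis element c in the differential of b(p;U).\<close>
definition dcoef :: "('a::lattice \<Rightarrow> 'a \<Rightarrow> bool) \<Rightarrow> 'a \<times> 'a set \<Rightarrow> 'a \<times> 'a set \<Rightarrow> ('a, 'k::comm_ring_1) spoly" where
  "dcoef lt b c = (case b of (p, U) \<Rightarrow>
     \<Sum>q\<in>U. (-1) ^ lam lt (diffel p q) (diffel p ` U) *
        ((if c = (p, U - {q}) then Yv (diffel p q) else 0)
       - (if c = (q, (\<lambda>u. inf q u) ` (U - {q})) then Xv (diffel p q) else 0)))"

text \<open>dtcoef b c: coefficient of basis element c in the differential of tilde b(r;T).\<close>
definition dtcoef :: "('a::lattice \<Rightarrow> 'a \<Rightarrow> bool) \<Rightarrow> 'a \<times> 'a set \<Rightarrow> 'a \<times> 'a set \<Rightarrow> ('a, 'k::comm_ring_1) spoly" where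
  "dtcoef lt b c = (case b of (r, T) \<Rightarrow>
     \<Sum>s\<in>T. (-1) ^ lam lt (diffel s r) ((\<lambda>s'. diffel s' r) ` T) *
        ((if c = (r, T - {s}) then Yv (diffel s r) else 0)
       - (if c = (s, (\<lambda>t. sup s t) ` (T - {s})) then Xv (diffel s r) else 0)))"

text \<open>sigma(tilde F) = tilde F tensor sigma-twisted S: same basis sigma(tilde b(r;T)),
  differential with sigma applied to all coefficients.\<close>
definition sdtcoef :: "('a::lattice \<Rightarrow> 'a \<Rightarrow> bool) \<Rightarrow> 'a \<times> 'a set \<Rightarrow> 'a \<times> 'a set \<Rightarrow> ('a, 'k::comm_ring_1) spoly" where
  "sdtcoef lt b c = sigma (dtcoef lt b c)"

text \<open>r^T: the join of the elements of T (taken together with r, so r^{} = r).\<close>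
definition topT :: "'a::lattice \<Rightarrow> 'a set \<Rightarrow> 'a" where
  "topT r T = Sup_fin (insert r T)"

definition Tr :: "'a::lattice \<Rightarrow> 'a set \<Rightarrow> 'a set" where
  "Tr r T = {q. r \<le> q \<and> q \<le> topT r T \<and> covers q (topT r T)}"

definition pcoef :: "'a::lattice \<times> 'a set \<Rightarrow> 'a \<times> 'a set \<Rightarrow> ('a, 'k::comm_ring_1) spoly" where
  "pcoef b c = (case b of (r, T) \<Rightarrow>
     (if c = (topT r T, Tr r T) then (-1) ^ card T else 0))"

end

theory Submission
  imports Defs "HOL-Library.Dual_Ordered_Lattice"
begin

(*
  For r in L and a set T of upper covers of r, the interval [r, r^T] is Boolean: A |-> r v (join A)
  is an isomorphism from the subsets of T onto it, because by distributivity s /\ x is r or s for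
  s in T and r <= x. Its coatoms are the joins u_s of T - {s}, so T_r = {u_s | s in T}; r is the
  meet of T_r and T is the set of covers of r below r^T, hence (r, T) |-> (r^T, T_r) is injective.
  In the dual lattice lower and upper neighbours trade places, so injectivity there gives the
  opposite inequality between the numbers of basis elements: the map is a bijection of bases and
  pi is a signed permutation.

  For the chain map property, the two faces (r, T - {s}) and (s, s v (T - {s})) of (r, T) are sent
  to the two faces (u_s, u_s /\ (T_r - {u_s})) and (r^T, T_r - {u_s}) of (r^T, T_r) at q = u_s.
  Their labels agree: s and u_s span a diamond with join r^T and meet r, and join-irreducibles of a
  distributive lattice are join-prime, so r^T \ u_s = s \ r. Hence the label sets r^T \ T_r and
  T \ r coincide and the signs (-1)^lambda agree for every total order. The involution sigma exchanges the x- and y-coefficients of the two faces, and the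
  factors (-1)^|T| and (-1)^(|T| - 1) absorb the minus sign between the two terms of the
  differential.
*)

definition botT :: "'a::lattice \<Rightarrow> 'a set \<Rightarrow> 'a" where
  "botT r T = Inf_fin (insert r T)"

lemma topT_empty [simp]: "topT r {} = r"
  by (simp add: topT_def)

lemma topT_insert: "finite A \<Longrightarrow> topT r (insert a A) = sup a (topT r A)"
  unfolding topT_def by (metis Sup_fin.insert finite_insert insert_commute insert_not_empty)

lemma topT_le_iff: "finite A \<Longrightarrow> topT r A \<le> y \<longleftrightarrow> r \<le> y \<and> (\<forall>a\<in>A. a \<le> y)"
  unfolding topT_def by (simp add: Sup_fin.bounded_iff)

lemma le_topT: "finite A \<Longrightarrow> a \<in> A \<Longrightarrow> a \<le> topT r A"
  unfolding topT_def by (simp add: Sup_fin.coboundedI)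

lemma base_le_topT: "finite A \<Longrightarrow> r \<le> topT r A"
  unfolding topT_def by (simp add: Sup_fin.coboundedI)

lemma topT_mono: "finite B \<Longrightarrow> A \<subseteq> B \<Longrightarrow> topT r A \<le> topT r B"
  using finite_subset[of A B] by (auto simp: topT_le_iff base_le_topT le_topT)

lemma topT_eq_base: "finite A \<Longrightarrow> \<forall>a\<in>A. a \<le> r \<Longrightarrow> topT r A = r"
  by (simp add: antisym base_le_topT topT_le_iff)

lemma inf_topT: "finite A \<Longrightarrow> inf x (topT r A) = topT (inf x r) (inf x ` A)"
  for x :: "'a::distrib_lattice"
  by (induction A rule: finite_induct) (simp_all add: topT_insert inf_sup_distrib1)

lemma sup_topT: "finite A \<Longrightarrow> sup x (topT r A) = topT (sup x r) (sup x ` A)"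
proof (induction A rule: finite_induct)
  case (insert a A)
  have "sup x (topT r (insert a A)) = sup (sup x a) (sup x (topT r A))"
    using insert(1) by (simp add: topT_insert ac_simps)
  then show ?case using insert by (simp add: topT_insert)
qed simp

lemma botT_empty [simp]: "botT r {} = r"
  by (simp add: botT_def)

lemma botT_insert: "finite A \<Longrightarrow> botT r (insert a A) = inf a (botT r A)"
  unfolding botT_def by (metis Inf_fin.insert finite_insert insert_commute insert_not_empty)

lemma coversD_between: "covers a b \<Longrightarrow> a \<le> z \<Longrightarrow> z \<le> b \<Longrightarrow> z = a \<or> z = b"
  unfolding covers_def using order.order_iff_strict by blast

section \<open>Boolean intervals above a set of covers\<close>

locale upper_covers =
  fixes r :: "'a::distrib_lattice" and T :: "'a set"
  assumes finite_T: "finite T" and covers_T: "s \<in> T \<Longrightarrow> covers r s"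
begin

lemma finite_subset_T: "A \<subseteq> T \<Longrightarrow> finite A"
  using finite_T finite_subset by blast

lemma base_less: "s \<in> T \<Longrightarrow> r < s"
  using covers_T covers_def by blast

lemma inf_eq_base: "s \<in> T \<Longrightarrow> t \<in> T \<Longrightarrow> s \<noteq> t \<Longrightarrow> inf s t = r"
proof -
  assume s: "s \<in> T" and t: "t \<in> T" and st: "s \<noteq> t"
  have "\<not> s \<le> t"
    using coversD_between[OF covers_T[OF t], of s] base_less[OF s] st by fastforce
  then have "inf s t \<noteq> s" by (metis inf.absorb_iff1)
  then show "inf s t = r"
    using coversD_between[OF covers_T[OF s], of "inf s t"] base_less[OF s] base_less[OF t]
    by (auto dest: less_imp_le)
qed

lemma le_topT_iff_mem: "A \<subseteq> T \<Longrightarrow> s \<in> T \<Longrightarrow> s \<le> topT r A \<longleftrightarrow> s \<in> A"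
proof
  assume A: "A \<subseteq> T" and s: "s \<in> T" and le: "s \<le> topT r A"
  show "s \<in> A"
  proof (rule ccontr)
    assume "s \<notin> A"
    then have "topT r (inf s ` A) = r"
      using A s inf_eq_base finite_subset_T[OF A] by (intro topT_eq_base) auto
    then have "inf s (topT r A) = r"
      using inf_topT[OF finite_subset_T[OF A], of s r] base_less[OF s] by (simp add: inf_absorb2)
    then show False using le base_less[OF s] by (simp add: inf_absorb1)
  qed
qed (use finite_subset_T le_topT in blast)

lemma topT_atoms_below:
  assumes "r \<le> x" "x \<le> topT r T"
  shows "topT r {s \<in> T. s \<le> x} = x"
proof (rule antisym)
  have "x = topT r (inf x ` T)"
    using inf_topT[OF finite_T, of x r] assms by (simp add: inf_absorb1 inf_absorb2)
  also have "\<dots> \<le> topT r {s \<in> T. s \<le> x}"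
  proof -
    have "inf x s \<le> topT r {s \<in> T. s \<le> x}" if s: "s \<in> T" for s
    proof (cases "s \<le> x")
      case True
      then show ?thesis using s finite_T le_topT[of "{s \<in> T. s \<le> x}" s r] by (auto intro: le_infI2)
    next
      case False
      have "r \<le> inf x s" using assms(1) base_less[OF s] by simp
      moreover have "inf x s \<noteq> s" using False by (metis inf.absorb_iff2)
      ultimately have "inf x s = r"
        using coversD_between[OF covers_T[OF s], of "inf x s"] by simp
      then show ?thesis using finite_T by (simp add: base_le_topT)
    qed
    then show ?thesis using finite_T by (simp add: topT_le_iff base_le_topT)
  qed
  finally show "x \<le> topT r {s \<in> T. s \<le> x}" .
  show "topT r {s \<in> T. s \<le> x} \<le> x" using finite_T assms by (simp add: topT_le_iff)
qed

lemma atoms_below_topT: "A \<subseteq> T \<Longrightarrow> {s \<in> T. s \<le> topT r A} = A"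
  using le_topT_iff_mem by blast

lemma topT_le_topT_iff: "A \<subseteq> T \<Longrightarrow> B \<subseteq> T \<Longrightarrow> topT r A \<le> topT r B \<longleftrightarrow> A \<subseteq> B"
  using le_topT_iff_mem[of B] le_topT[OF finite_subset_T, of A _ r] topT_mono[OF finite_subset_T]
  by (meson order_trans subset_iff)

lemma topT_eq_topT_iff: "A \<subseteq> T \<Longrightarrow> B \<subseteq> T \<Longrightarrow> topT r A = topT r B \<longleftrightarrow> A = B"
  by (metis atoms_below_topT)

lemma inf_topT_topT: "A \<subseteq> T \<Longrightarrow> B \<subseteq> T \<Longrightarrow> inf (topT r A) (topT r B) = topT r (A \<inter> B)"
proof -
  assume A: "A \<subseteq> T" and B: "B \<subseteq> T"
  let ?x = "inf (topT r A) (topT r B)"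
  have "r \<le> ?x" using A B by (simp add: base_le_topT finite_subset_T)
  moreover have "?x \<le> topT r T" using topT_mono[OF finite_T A] by (simp add: le_infI1)
  ultimately have "?x = topT r {s \<in> T. s \<le> ?x}" by (rule topT_atoms_below[symmetric])
  also have "{s \<in> T. s \<le> ?x} = A \<inter> B" using le_topT_iff_mem A B by auto
  finally show ?thesis .
qed

lemma covers_topT_insert: "A \<subseteq> T \<Longrightarrow> s \<in> T - A \<Longrightarrow> covers (topT r A) (topT r (insert s A))"
proof -
  assume A: "A \<subseteq> T" and s: "s \<in> T - A"
  have sA: "insert s A \<subseteq> T" using A s by auto
  have "topT r A < topT r (insert s A)"
    using topT_le_topT_iff[OF A sA] topT_eq_topT_iff[OF A sA] s by (auto simp: less_le)
  moreover have "z = topT r A \<or> z = topT r (insert s A)"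
    if z: "topT r A \<le> z" "z \<le> topT r (insert s A)" for z
  proof -
    define Z where "Z = {s \<in> T. s \<le> z}"
    have Z: "Z \<subseteq> T" by (auto simp: Z_def)
    have "r \<le> z" using base_le_topT[OF finite_subset_T[OF A]] z(1) by (rule order_trans)
    moreover have "z \<le> topT r T" using z(2) topT_mono[OF finite_T sA] by (rule order_trans)
    ultimately have z_eq: "z = topT r Z" unfolding Z_def by (rule topT_atoms_below[symmetric])
    have "A \<subseteq> Z" "Z \<subseteq> insert s A"
      using z topT_le_topT_iff[OF A Z] topT_le_topT_iff[OF Z sA] by (simp_all add: z_eq)
    then have "Z = A \<or> Z = insert s A" by auto
    then show ?thesis using z_eq by auto
  qed
  ultimately show ?thesis unfolding covers_def by (auto simp: less_le_not_le)
qed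

definition coatom :: "'a \<Rightarrow> 'a" where
  "coatom s = topT r (T - {s})"

lemma covers_coatom: "s \<in> T \<Longrightarrow> covers (coatom s) (topT r T)"
  unfolding coatom_def using covers_topT_insert[of "T - {s}" s] by (simp add: insert_absorb)

lemma le_coatom_iff: "s \<in> T \<Longrightarrow> t \<in> T \<Longrightarrow> t \<le> coatom s \<longleftrightarrow> t \<noteq> s"
  unfolding coatom_def by (subst le_topT_iff_mem) auto

lemma inj_on_coatom: "inj_on coatom T"
  by (rule inj_onI) (metis le_coatom_iff)

lemma coatom_cases:
  assumes "r \<le> x" "covers x (topT r T)"
  obtains s where "s \<in> T" "x = coatom s"
proof -
  define X where "X = {s \<in> T. s \<le> x}"
  have X: "X \<subseteq> T" by (auto simp: X_def)
  have x_eq: "x = topT r X"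
    unfolding X_def using assms by (intro topT_atoms_below[symmetric]) (auto simp: covers_def)
  then have "X \<noteq> T" using assms(2) by (auto simp: covers_def)
  then obtain s where s: "s \<in> T" "s \<notin> X" using X by auto
  then have "x \<le> coatom s"
    unfolding x_eq coatom_def using X by (subst topT_le_topT_iff) auto
  moreover have "coatom s \<le> topT r T" "coatom s \<noteq> topT r T"
    using covers_coatom[OF s(1)] by (auto simp: covers_def)
  ultimately have "x = coatom s" using coversD_between[OF assms(2)] by blast
  with s(1) show thesis by (rule that)
qed

lemma Tr_eq_coatom_image: "Tr r T = coatom ` T"
proof
  show "Tr r T \<subseteq> coatom ` T" unfolding Tr_def by (blast elim: coatom_cases)
  have "r \<le> coatom s" for s unfolding coatom_def using finite_T by (simp add: base_le_topT)
  then show "coatom ` T \<subseteq> Tr r T"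
    using covers_coatom by (auto simp: Tr_def covers_def less_imp_le)
qed

lemma card_Tr: "card (Tr r T) = card T"
  by (simp add: Tr_eq_coatom_image card_image[OF inj_on_coatom])

lemma botT_coatom_image:
  assumes "B \<subseteq> T" shows "botT (topT r T) (coatom ` B) = topT r (T - B)"
  using finite_subset_T[OF assms] assms
proof (induction B rule: finite_induct)
  case (insert b B)
  have "botT (topT r T) (coatom ` insert b B) = inf (topT r (T - {b})) (topT r (T - B))"
    using insert by (simp add: botT_insert coatom_def)
  also have "\<dots> = topT r ((T - {b}) \<inter> (T - B))" by (rule inf_topT_topT) auto
  also have "(T - {b}) \<inter> (T - B) = T - insert b B" by auto
  finally show ?case .
qed simp

lemma botT_Tr: "botT (topT r T) (Tr r T) = r"
  using botT_coatom_image[of T] by (simp add: Tr_eq_coatom_image)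

lemma upper_covers_below_topT: "{s. covers r s \<and> s \<le> topT r T} = T"
proof (intro equalityI subsetI)
  fix s assume "s \<in> {s. covers r s \<and> s \<le> topT r T}"
  then have c: "covers r s" and le: "s \<le> topT r T" by auto
  have "topT r {t \<in> T. t \<le> s} = s" using c le by (intro topT_atoms_below) (auto simp: covers_def)
  then have "{t \<in> T. t \<le> s} \<noteq> {}" using c by (metis topT_empty covers_def)
  then obtain t where "t \<in> T" "t \<le> s" by auto
  then show "s \<in> T" using coversD_between[OF c, of t] base_less by force
qed (use covers_T le_topT finite_T in auto)

lemma topT_pair: "s \<in> T \<Longrightarrow> topT r {t, s} = sup s t"
  using topT_insert[of "{s}" r t] topT_insert[of "{}" r s] base_less[of s]
  by (simp add: sup_absorb1 sup_absorb2 less_imp_le sup_commute)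

lemma inf_coatom: "s \<in> T \<Longrightarrow> inf s (coatom s) = r"
  using inf_topT_topT[of "{s}" "T - {s}"] topT_pair[of s s] by (simp add: coatom_def)

lemma sup_coatom: "s \<in> T \<Longrightarrow> sup s (coatom s) = topT r T"
  using topT_insert[of "T - {s}" r s] finite_T by (simp add: coatom_def insert_absorb)

lemma Tr_remove: "s \<in> T \<Longrightarrow> Tr r (T - {s}) = inf (coatom s) ` (Tr r T - {coatom s})"
proof -
  assume s: "s \<in> T"
  interpret face: upper_covers r "T - {s}" using finite_T covers_T by unfold_locales auto
  have "face.coatom t = inf (coatom s) (coatom t)" for t
  proof -
    have "(T - {s}) \<inter> (T - {t}) = T - {s} - {t}" by auto
    then show ?thesis using inf_topT_topT[of "T - {s}" "T - {t}"] by (simp add: face.coatom_def coatom_def)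
  qed
  then have "Tr r (T - {s}) = inf (coatom s) ` coatom ` (T - {s})"
    by (simp add: face.Tr_eq_coatom_image image_image)
  also have "coatom ` (T - {s}) = Tr r T - {coatom s}"
    using inj_on_image_set_diff[OF inj_on_coatom, of T "{s}"] s by (simp add: Tr_eq_coatom_image)
  finally show ?thesis .
qed

lemma topT_sup_image: "s \<in> T \<Longrightarrow> topT s (sup s ` (T - {s})) = topT r T"
  using sup_topT[of "T - {s}" s r] sup_coatom[of s] base_less[of s] finite_T
  by (simp add: coatom_def sup_absorb1 less_imp_le)

lemma Tr_sup_image: "s \<in> T \<Longrightarrow> Tr s (sup s ` (T - {s})) = Tr r T - {coatom s}"
proof -
  assume s: "s \<in> T"
  have "Tr s (sup s ` (T - {s})) = {q \<in> Tr r T. s \<le> q}"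
    using topT_sup_image[OF s] base_less[OF s] by (auto simp: Tr_def)
  also have "\<dots> = coatom ` (T - {s})"
    using le_coatom_iff[OF _ s] by (auto simp: Tr_eq_coatom_image)
  also have "\<dots> = Tr r T - {coatom s}"
    using inj_on_image_set_diff[OF inj_on_coatom, of T "{s}"] s by (simp add: Tr_eq_coatom_image)
  finally show ?thesis .
qed

lemma sup_image_subset_upperN: "s \<in> T \<Longrightarrow> sup s ` (T - {s}) \<subseteq> upperN s"
proof
  fix x assume s: "s \<in> T" and "x \<in> sup s ` (T - {s})"
  then obtain t where t: "t \<in> T - {s}" and x: "x = sup s t" by blast
  have "covers (topT r {s}) (topT r {t, s})" using s t by (intro covers_topT_insert) auto
  moreover have "topT r {s} = s" using topT_pair[OF s, of s] by simp
  ultimately show "x \<in> upperN s" using topT_pair[OF s, of t] by (simp add: x upperN_def)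
qed

lemma inj_on_sup: "s \<in> T \<Longrightarrow> inj_on (sup s) (T - {s})"
proof (rule inj_onI)
  fix t t' assume s: "s \<in> T" and t: "t \<in> T - {s}" "t' \<in> T - {s}" and "sup s t = sup s t'"
  then have "topT r {t, s} = topT r {t', s}" by (simp add: topT_pair)
  then have "{t, s} = {t', s}" using s t by (subst (asm) topT_eq_topT_iff) auto
  then show "t = t'" using t by (auto simp: doubleton_eq_iff)
qed

end

locale finite_upper_covers = upper_covers r T for r :: "'a::{finite, distrib_lattice}" and T

lemma finite_upper_covers_if_subset_upperN:
  "T \<subseteq> upperN r \<Longrightarrow> finite_upper_covers r (T :: 'a::{finite, distrib_lattice} set)"
  by unfold_locales (auto simp: upperN_def)

section \<open>Join-irreducible elements\<close>

lemma exists_lower_cover_above: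
  fixes x y :: "'a::{finite, order}"
  assumes "x < y"
  obtains z where "x \<le> z" "covers z y"
proof -
  let ?S = "{z. x \<le> z \<and> z < y}"
  have "finite ?S" "?S \<noteq> {}" using assms by auto
  then obtain m where m: "m \<in> ?S" and maximal: "\<forall>z\<in>?S. m \<le> z \<longrightarrow> m = z"
    by (meson finite_has_maximal)
  have "covers m y" unfolding covers_def
  proof (intro conjI notI)
    show "m < y" using m by simp
    assume "\<exists>z. m < z \<and> z < y"
    then obtain z where z: "m < z" "z < y" by blast
    then have "m = z" using m maximal by auto
    then show False using z(1) by simp
  qed
  then show thesis using m(1) by (intro that) auto
qed

lemma JI_join_prime:
  fixes j a b :: "'a::{finite, distrib_lattice}"
  assumes j: "j \<in> JI" and le: "j \<le> sup a b"
  shows "j \<le> a \<or> j \<le> b"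
proof (rule ccontr)
  assume n: "\<not> (j \<le> a \<or> j \<le> b)"
  from j have "card (lowerN j) = 1" by (simp add: JI_def)
  then obtain c where c: "lowerN j = {c}" by (rule card_1_singletonE)
  have below_c: "x \<le> c" if x_less: "x < j" for x
  proof -
    obtain z where "x \<le> z" "covers z j" using exists_lower_cover_above[OF x_less] .
    then show ?thesis using c by (auto simp: lowerN_def)
  qed
  have "j = inf j (sup a b)" using le by (simp add: inf_absorb1)
  also have "\<dots> = sup (inf j a) (inf j b)" by (rule inf_sup_distrib1)
  also have "\<dots> \<le> c" using n by (intro sup_least below_c) (auto simp: less_le_not_le)
  finally have "j \<le> c" .
  moreover have "c < j" using c by (auto simp: lowerN_def covers_def)
  ultimately show False by simp
qed

lemma ell_diff_diamond:
  fixes s q :: "'a::{finite, distrib_lattice}"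
  shows "ell (sup s q) - ell q = ell s - ell (inf s q)"
proof -
  have "j \<le> sup s q \<and> \<not> j \<le> q \<longleftrightarrow> j \<le> s \<and> \<not> j \<le> inf s q" if "j \<in> JI" for j
    using JI_join_prime[OF that, of s q] by (auto intro: le_supI1)
  then show ?thesis by (auto simp: ell_def)
qed

section \<open>The bijection of bases\<close>

definition pi_basis :: "'a::lattice \<times> 'a set \<Rightarrow> 'a \<times> 'a set" where
  "pi_basis b = (topT (fst b) (snd b), Tr (fst b) (snd b))"

lemma pcoef_eq_pi_basis: "pcoef b c = (if c = pi_basis b then (-1) ^ card (snd b) else 0)"
  by (cases b) (simp add: pcoef_def pi_basis_def)

lemma pi_basis_in_Bas:
  fixes b :: "'a::{finite, distrib_lattice} \<times> 'a set"
  assumes "b \<in> Bast i"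
  shows "pi_basis b \<in> Bas i"
proof -
  obtain r T where b: "b = (r, T)" and T: "T \<subseteq> upperN r" "card T = i"
    using assms by (auto simp: Bast_def)
  interpret finite_upper_covers r T using T(1) by (rule finite_upper_covers_if_subset_upperN)
  show ?thesis using card_Tr T by (auto simp: b pi_basis_def Bas_def Tr_def lowerN_def)
qed

lemma inj_on_pi_basis: "inj_on pi_basis (Bast i :: ('a::{finite, distrib_lattice} \<times> 'a set) set)"
proof (rule inj_onI)
  fix b b' :: "'a \<times> 'a set"
  assume "b \<in> Bast i" "b' \<in> Bast i" and eq: "pi_basis b = pi_basis b'"
  then obtain r T r' T' where b: "b = (r, T)" "b' = (r', T')" "T \<subseteq> upperN r" "T' \<subseteq> upperN r'"
    by (auto simp: Bast_def)
  interpret A: finite_upper_covers r T using b(3) by (rule finite_upper_covers_if_subset_upperN)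
  interpret B: finite_upper_covers r' T' using b(4) by (rule finite_upper_covers_if_subset_upperN)
  have tops: "topT r T = topT r' T'" "Tr r T = Tr r' T'" using eq by (simp_all add: b pi_basis_def)
  have "r = r'" using A.botT_Tr B.botT_Tr by (simp add: tops)
  moreover have "T = T'"
    using A.upper_covers_below_topT B.upper_covers_below_topT tops(1) \<open>r = r'\<close> by metis
  ultimately show "b = b'" by (simp add: b)
qed

lemma covers_dual_iff: "covers (dual x) (dual y) \<longleftrightarrow> covers y x"
  unfolding covers_def by (metis dual_undual less_dual_iff)

lemma mem_dual_image_iff: "x \<in> dual ` A \<longleftrightarrow> undual x \<in> A"
  using inj_image_mem_iff[OF inj_dual, of "undual x" A] by simp

lemma upperN_dual: "upperN (dual p) = dual ` lowerN p"
proof (rule set_eqI)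
  fix x
  show "x \<in> upperN (dual p) \<longleftrightarrow> x \<in> dual ` lowerN p"
    using covers_dual_iff[of p "undual x"] by (simp add: upperN_def lowerN_def mem_dual_image_iff)
qed

lemma lowerN_dual: "lowerN (dual p) = dual ` upperN p"
proof (rule set_eqI)
  fix x
  show "x \<in> lowerN (dual p) \<longleftrightarrow> x \<in> dual ` upperN p"
    using covers_dual_iff[of "undual x" p] by (simp add: upperN_def lowerN_def mem_dual_image_iff)
qed

lemma card_neighbour_basis_dual:
  fixes N :: "'a \<Rightarrow> 'a set" and M :: "'a dual \<Rightarrow> 'a dual set"
  assumes M: "\<And>p. M (dual p) = dual ` N p"
  shows "card {(p, U). U \<subseteq> N p \<and> card U = i} = card {(r, T). T \<subseteq> M r \<and> card T = i}"
proof (rule bij_betw_same_card[OF bij_betw_byWitness])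
  let ?A = "{(p, U). U \<subseteq> N p \<and> card U = i}" and ?B = "{(r, T). T \<subseteq> M r \<and> card T = i}"
  have card_dual: "card (dual ` U) = card U" for U :: "'a set"
    by (rule card_image[OF inj_on_subset[OF inj_dual subset_UNIV]])
  have card_undual: "card (undual ` T) = card T" for T :: "'a dual set"
    by (rule card_image[OF inj_on_subset[OF inj_undual subset_UNIV]])
  show "\<forall>a\<in>?A. map_prod undual (image undual) (map_prod dual (image dual) a) = a"
    by (auto simp: image_image)
  show "\<forall>b\<in>?B. map_prod dual (image dual) (map_prod undual (image undual) b) = b"
    by (auto simp: image_image)
  show "map_prod dual (image dual) ` ?A \<subseteq> ?B"
    using M by (auto simp: card_dual)
  have "undual ` T \<subseteq> N (undual r)" if "T \<subseteq> M r" for r T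
    using that M[of "undual r"] by (auto simp: mem_dual_image_iff)
  then show "map_prod undual (image undual) ` ?B \<subseteq> ?A"
    by (auto simp: card_undual)
qed

lemma bij_betw_pi_basis:
  "bij_betw pi_basis (Bast i) (Bas i :: ('a::{finite, distrib_lattice} \<times> 'a set) set)"
proof -
  have image: "pi_basis ` Bast i \<subseteq> (Bas i :: ('b::{finite, distrib_lattice} \<times> 'b set) set)" for i
    using pi_basis_in_Bas by blast
  have "card (Bas i :: ('a \<times> 'a set) set) = card (Bast i :: ('a dual \<times> 'a dual set) set)"
    unfolding Bas_def Bast_def by (rule card_neighbour_basis_dual) (rule upperN_dual)
  also have "\<dots> \<le> card (Bas i :: ('a dual \<times> 'a dual set) set)"
    by (rule card_inj_on_le[OF inj_on_pi_basis image]) simp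
  also have "\<dots> = card (Bast i :: ('a \<times> 'a set) set)"
    unfolding Bas_def Bast_def by (rule card_neighbour_basis_dual[symmetric]) (rule lowerN_dual)
  also have "\<dots> = card (pi_basis ` Bast i :: ('a \<times> 'a set) set)"
    by (rule card_image[OF inj_on_pi_basis, symmetric])
  finally have "pi_basis ` Bast i = (Bas i :: ('a \<times> 'a set) set)"
    using image by (intro card_seteq) simp_all
  then show ?thesis by (simp add: bij_betw_def inj_on_pi_basis)
qed

lemma applyM_relabel:
  assumes bij: "bij_betw \<phi> B C" and fin: "finite B"
    and M: "\<And>b c. b \<in> B \<Longrightarrow> M b c = (if c = \<phi> b then e else 0)"
  shows "applyM B M f c = (if c \<in> C then f (inv_into B \<phi> c) * e else 0)"
proof (cases "c \<in> C")
  case True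
  define b0 where "b0 = inv_into B \<phi> c"
  have b0: "b0 \<in> B" "\<phi> b0 = c"
    using bij True by (auto simp: b0_def bij_betw_def inv_into_into f_inv_into_f)
  have "applyM B M f c = (\<Sum>b\<in>B. if b = b0 then f b * e else 0)"
    unfolding applyM_def using bij b0 by (intro sum.cong) (auto simp: M bij_betw_def inj_on_eq_iff)
  also have "\<dots> = f b0 * e" using fin b0 by simp
  finally show ?thesis using True by (simp add: b0_def)
next
  case False
  then have "M b c = 0" if "b \<in> B" for b using that bij M by (auto simp: bij_betw_def)
  then show ?thesis using False by (simp add: applyM_def)
qed

lemma applyM_pcoef:
  "applyM (Bast i) (pcoef :: _ \<Rightarrow> _ \<Rightarrow> ('a::{finite, distrib_lattice}, 'k::comm_ring_1) spoly)
     = (\<lambda>f c. if c \<in> Bas i then f (inv_into (Bast i) pi_basis c) * (-1) ^ i else 0)"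
  by (intro ext applyM_relabel[OF bij_betw_pi_basis]) (auto simp: pcoef_eq_pi_basis Bast_def)

lemma Scar_mult_sign: "a \<in> Scar \<Longrightarrow> a * (-1) ^ i \<in> Scar"
  by (cases "even i") (simp_all add: Scar_def)

lemma zero_in_Scar: "0 \<in> Scar"
  by (simp add: Scar_def)

lemma mult_sign_sign: "a * (-1) ^ i * (-1) ^ i = (a :: 'r::comm_ring_1)"
  by (simp add: mult.assoc flip: power_add)

lemma bij_betw_Fmod_relabel:
  assumes bij: "bij_betw \<phi> B C"
  shows "bij_betw (\<lambda>f c. if c \<in> C then f (inv_into B \<phi> c) * (-1) ^ i else 0)
           (Fmod B :: ('b \<Rightarrow> ('a::order, 'k::comm_ring_1) spoly) set) (Fmod C)"
proof -
  have "inv_into B \<phi> (\<phi> b) = b" "\<phi> b \<in> C" if "b \<in> B" for b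
    using bij that by (auto simp: bij_betw_def)
  moreover have "inv_into B \<phi> c \<in> B" "\<phi> (inv_into B \<phi> c) = c" if "c \<in> C" for c
    using bij that by (auto simp: bij_betw_def inv_into_into f_inv_into_f)
  ultimately show ?thesis
    by (intro bij_betw_byWitness[where f' = "\<lambda>g b. if b \<in> B then g (\<phi> b) * (-1) ^ i else 0"])
      (auto simp: Fmod_def mult_sign_sign Scar_mult_sign zero_in_Scar)
qed

lemma swapv_swapv [simp]: "swapv (swapv v) = v"
  by (simp add: swapv_def)

lemma inj_swapv: "inj swapv"
  by (metis injI swapv_swapv)

lemma map_key_swapv_involution: "Poly_Mapping.map_key swapv (Poly_Mapping.map_key swapv m) = m"
  by (simp add: map_key_compose[OF inj_swapv inj_swapv] comp_def map_key_id)

lemma inj_map_key_swapv: "inj (Poly_Mapping.map_key swapv)"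
  by (metis injI map_key_swapv_involution)

lemma sigma_add: "sigma (a + b) = sigma a + sigma b"
  unfolding sigma_def by (rule map_key_plus[OF inj_map_key_swapv])

lemma sigma_zero [simp]: "sigma 0 = 0"
  unfolding sigma_def by (rule map_key_zero[OF inj_map_key_swapv])

lemma sigma_uminus: "sigma (- a) = - sigma a"
  using sigma_add[of "- a" a] by (simp add: eq_neg_iff_add_eq_0)

lemma sigma_diff: "sigma (a - b) = sigma a - sigma b"
  using sigma_add[of a "- b"] by (simp add: sigma_uminus)

lemma sigma_sum: "sigma (\<Sum>x\<in>A. g x) = (\<Sum>x\<in>A. sigma (g x))"
  using sum_comp_morphism[of sigma g A] by (simp add: sigma_add comp_def)

lemma sigma_sign_mult: "sigma ((-1) ^ k * a) = (-1) ^ k * sigma a"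
  by (cases "even k") (simp_all add: sigma_uminus)

lemma sigma_if_zero: "sigma (if P then a else 0) = (if P then sigma a else 0)"
  by simp

lemma map_key_swapv_single: "Poly_Mapping.map_key swapv (Poly_Mapping.single (p, b) n) = Poly_Mapping.single (p, \<not> b) n"
  using map_key_single[OF inj_swapv, of "(p, \<not> b)" n] by (simp add: swapv_def)

lemma sigma_Yv: "sigma (Yv p) = Xv p"
proof -
  have "Poly_Mapping.single (p, False) (1::nat) = Poly_Mapping.map_key swapv (Poly_Mapping.single (p, True) 1)"
    by (simp add: map_key_swapv_single)
  then show ?thesis unfolding sigma_def Xv_def Yv_def by (simp only: map_key_single[OF inj_map_key_swapv])
qed

lemma sigma_Xv: "sigma (Xv p) = Yv p"
proof -
  have "Poly_Mapping.single (p, True) (1::nat) = Poly_Mapping.map_key swapv (Poly_Mapping.single (p, False) 1)"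
    by (simp add: map_key_swapv_single)
  then show ?thesis unfolding sigma_def Xv_def Yv_def by (simp only: map_key_single[OF inj_map_key_swapv])
qed

definition face_sign :: "('a \<Rightarrow> 'a \<Rightarrow> bool) \<Rightarrow> 'a::order \<Rightarrow> 'a set \<Rightarrow> 'a \<Rightarrow> 'r::comm_ring_1" where
  "face_sign lt r T s = (-1) ^ lam lt (diffel s r) ((\<lambda>s'. diffel s' r) ` T)"

lemma sdtcoef_eq:
  "sdtcoef lt (r, T) b =
     (\<Sum>s\<in>T. face_sign lt r T s *
        ((if b = (r, T - {s}) then Xv (diffel s r) else 0)
       - (if b = (s, sup s ` (T - {s})) then Yv (diffel s r) else 0)))"
  unfolding sdtcoef_def dtcoef_def face_sign_def
  by (simp only: prod.case sigma_sum sigma_sign_mult sigma_diff sigma_if_zero sigma_Xv sigma_Yv sigma_zero)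

section \<open>The chain map\<close>

context upper_covers
begin

lemma face_below_in_Bast: "s \<in> T \<Longrightarrow> (r, T - {s}) \<in> Bast (card T - 1)"
  using covers_T finite_T by (auto simp: Bast_def upperN_def)

lemma face_above_in_Bast: "s \<in> T \<Longrightarrow> (s, sup s ` (T - {s})) \<in> Bast (card T - 1)"
  using sup_image_subset_upperN finite_T by (auto simp: Bast_def card_image inj_on_sup)

lemma pi_basis_face_below:
  "s \<in> T \<Longrightarrow> pi_basis (r, T - {s}) = (coatom s, inf (coatom s) ` (Tr r T - {coatom s}))"
  by (simp add: pi_basis_def coatom_def Tr_remove)

lemma pi_basis_face_above:
  "s \<in> T \<Longrightarrow> pi_basis (s, sup s ` (T - {s})) = (topT r T, Tr r T - {coatom s})"
  by (simp add: pi_basis_def topT_sup_image Tr_sup_image)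

end

context finite_upper_covers
begin

lemma diffel_topT_coatom: "s \<in> T \<Longrightarrow> diffel (topT r T) (coatom s) = diffel s r"
  using ell_diff_diamond[of s "coatom s"] by (simp add: diffel_def sup_coatom inf_coatom)

lemma diffel_image_Tr: "diffel (topT r T) ` Tr r T = (\<lambda>s. diffel s r) ` T"
  by (simp add: Tr_eq_coatom_image image_image diffel_topT_coatom cong: image_cong)

lemma dcoef_pi_basis:
  "dcoef lt (pi_basis (r, T)) c =
     (\<Sum>s\<in>T. face_sign lt r T s *
        ((if c = pi_basis (s, sup s ` (T - {s})) then Yv (diffel s r) else 0)
       - (if c = pi_basis (r, T - {s}) then Xv (diffel s r) else 0)))"
proof -
  have "dcoef lt (pi_basis (r, T)) c =
     (\<Sum>q\<in>coatom ` T. (-1) ^ lam lt (diffel (topT r T) q) ((\<lambda>s'. diffel s' r) ` T) *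
        ((if c = (topT r T, Tr r T - {q}) then Yv (diffel (topT r T) q) else 0)
       - (if c = (q, inf q ` (Tr r T - {q})) then Xv (diffel (topT r T) q) else 0)))"
    by (simp add: dcoef_def pi_basis_def diffel_image_Tr flip: Tr_eq_coatom_image)
  also have "\<dots> = (\<Sum>s\<in>T. face_sign lt r T s *
        ((if c = pi_basis (s, sup s ` (T - {s})) then Yv (diffel s r) else 0)
       - (if c = pi_basis (r, T - {s}) then Xv (diffel s r) else 0)))"
    unfolding sum.reindex[OF inj_on_coatom] comp_def
    by (intro sum.cong refl)
      (simp only: face_sign_def diffel_topT_coatom pi_basis_face_below pi_basis_face_above)
  finally show ?thesis .
qed

lemma sum_sdtcoef_mult:
  "(\<Sum>b\<in>Bast (card T - 1). sdtcoef lt (r, T) b * g b) =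
     (\<Sum>s\<in>T. face_sign lt r T s *
        (Xv (diffel s r) * g (r, T - {s}) - Yv (diffel s r) * g (s, sup s ` (T - {s}))))"
proof -
  have face_sum: "(\<Sum>b\<in>Bast (card T - 1). e * ((if b = (r, T - {s}) then x else 0)
        - (if b = (s, sup s ` (T - {s})) then y else 0)) * g b)
      = e * (x * g (r, T - {s}) - y * g (s, sup s ` (T - {s})))" if s: "s \<in> T" for s e x y
  proof -
    have "(\<Sum>b\<in>Bast (card T - 1). e * ((if b = (r, T - {s}) then x else 0)
          - (if b = (s, sup s ` (T - {s})) then y else 0)) * g b)
        = (\<Sum>b\<in>Bast (card T - 1). (if b = (r, T - {s}) then e * x * g b else 0)
          - (if b = (s, sup s ` (T - {s})) then e * y * g b else 0))"
      by (intro sum.cong) (auto simp: algebra_simps)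
    also have "\<dots> = e * x * g (r, T - {s}) - e * y * g (s, sup s ` (T - {s}))"
      using face_below_in_Bast[OF s] face_above_in_Bast[OF s] by (simp add: sum_subtractf)
    finally show ?thesis by (simp add: algebra_simps)
  qed
  show ?thesis
    unfolding sdtcoef_eq sum_distrib_right
    by (subst sum.swap) (intro sum.cong refl face_sum)
qed

lemma sign_dcoef_pi_basis:
  assumes "T \<noteq> {}"
  shows "(-1) ^ card T * dcoef lt (pi_basis (r, T)) c
           = (\<Sum>b\<in>Bast (card T - 1). sdtcoef lt (r, T) b * pcoef b c)"
proof -
  obtain n where n: "card T = Suc n" using assms finite_T by (cases "card T") auto
  have card_faces: "card (T - {s}) = n" "card (sup s ` (T - {s})) = n" if "s \<in> T" for s
    using face_below_in_Bast[OF that] face_above_in_Bast[OF that] n by (auto simp: Bast_def)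
  show ?thesis
    unfolding sum_sdtcoef_mult dcoef_pi_basis sum_distrib_left
    by (intro sum.cong refl) (simp add: pcoef_eq_pi_basis card_faces n algebra_simps)
qed

end

lemma applyM_pcoef_pi_basis:
  fixes f :: "'a::{finite, distrib_lattice} \<times> 'a set \<Rightarrow> ('a, 'k::comm_ring_1) spoly"
  assumes "b \<in> Bast i"
  shows "applyM (Bast i) pcoef f (pi_basis b) = f b * (-1) ^ i"
  using assms by (simp add: applyM_pcoef pi_basis_in_Bas inv_into_f_f[OF inj_on_pi_basis])

lemma pi_chain_map:
  fixes f :: "'a::{finite, distrib_lattice} \<times> 'a set \<Rightarrow> ('a, 'k::comm_ring_1) spoly"
  assumes "1 \<le> i"
  shows "applyM (Bas i) (dcoef lt) (applyM (Bast i) pcoef f)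
           = applyM (Bast (i - 1)) pcoef (applyM (Bast i) (sdtcoef lt) f)" (is "?L = ?R")
proof
  fix c
  have face_identity: "(-1) ^ i * dcoef lt (pi_basis b) c
      = (\<Sum>b'\<in>Bast (i - 1). sdtcoef lt b b' * (pcoef b' c :: ('a, 'k) spoly))" if "b \<in> Bast i" for b
  proof -
    obtain r T where b: "b = (r, T)" by (cases b)
    with that have T: "T \<subseteq> upperN r" "card T = i" by (simp_all add: Bast_def)
    interpret finite_upper_covers r T using T(1) by (rule finite_upper_covers_if_subset_upperN)
    have "T \<noteq> {}" using T(2) assms by auto
    then show ?thesis using sign_dcoef_pi_basis[of lt c] T(2) by (simp add: b)
  qed
  have "?L c = (\<Sum>b\<in>Bast i. applyM (Bast i) pcoef f (pi_basis b) * dcoef lt (pi_basis b) c)"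
    unfolding applyM_def by (rule sum.reindex_bij_betw[OF bij_betw_pi_basis, symmetric])
  also have "\<dots> = (\<Sum>b\<in>Bast i. f b * ((-1) ^ i * dcoef lt (pi_basis b) c))"
    by (intro sum.cong refl) (simp add: applyM_pcoef_pi_basis)
  also have "\<dots> = (\<Sum>b\<in>Bast i. f b * (\<Sum>b'\<in>Bast (i - 1). sdtcoef lt b b' * pcoef b' c))"
    by (intro sum.cong refl) (simp add: face_identity)
  also have "\<dots> = ?R c"
    unfolding applyM_def sum_distrib_left sum_distrib_right
    by (subst sum.swap) (simp add: mult.assoc)
  finally show "?L c = ?R c" .
qed

theorem proposition3p6:
  fixes lt :: "'a::{finite, distrib_lattice} \<Rightarrow> 'a \<Rightarrow> bool"
    and K :: "'k::field itself"
  assumes irrefl: "\<forall>p\<in>JI. \<not> lt p p"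
    and trans: "\<forall>p\<in>JI. \<forall>q\<in>JI. \<forall>r\<in>JI. lt p q \<longrightarrow> lt q r \<longrightarrow> lt p r"
    and total: "\<forall>p\<in>JI. \<forall>q\<in>JI. p \<noteq> q \<longrightarrow> lt p q \<or> lt q p"
    and extends: "\<forall>p\<in>JI. \<forall>q\<in>JI. p < q \<longrightarrow> lt p q"
  shows "(\<forall>i. bij_betw (applyM (Bast i) (pcoef :: _ \<Rightarrow> _ \<Rightarrow> ('a, 'k) spoly))
                        (Fmod (Bast i)) (Fmod (Bas i)))
       \<and> (\<forall>i\<ge>1. \<forall>f \<in> (Fmod (Bast i) :: ('a \<times> 'a set \<Rightarrow> ('a, 'k) spoly) set).
            applyM (Bas i) (dcoef lt) (applyM (Bast i) pcoef f)
          = applyM (Bast (i - 1)) pcoef (applyM (Bast i) (sdtcoef lt) f))"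
proof (intro conjI allI impI ballI)
  show "bij_betw (applyM (Bast i) (pcoef :: _ \<Rightarrow> _ \<Rightarrow> ('a, 'k) spoly)) (Fmod (Bast i)) (Fmod (Bas i))" for i
    unfolding applyM_pcoef by (rule bij_betw_Fmod_relabel[OF bij_betw_pi_basis])
qed (rule pi_chain_map)

end
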